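(* Let $\gamma>0$ and let $K(x,y)=e^{-\gamma|x-y|^2}$ be the one-dimensional Gaussian kernel on $\mathbb{R}$. There exists a finite dataset $X\subset\mathbb{R}$ such that for every $D\in\mathbb{N}$ and every map $\phi=(\phi_1,\dots,\phi_D):X\to\mathbb{R}^D$ satisfying $\sum_{j=1}^D\phi_j(x)\phi_j(y)=K(x,y)$ for all $x,y\in X$, there exists a component $\phi_j$, $j\in[D]$, that is not monotonic on $X$ (i.e. $\phi_j$ is neither nondecreasing nor nonincreasing as a function on the ordered set $X$). *)

theory Defs
  imports "HOL-Analysis.Analysis"
begin

definition gauss_kernel :: "real \<Rightarrow> real \<Rightarrow> real \<Rightarrow> real" where
  "gauss_kernel \<gamma> x y = exp (- \<gamma> * \<bar>x - y\<bar>^2)"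

end

theory Submission
  imports Defs
begin

text \<open>If every feature \<open>\<phi>\<^sub>j\<close> is monotone on \<open>a \<le> b \<le> c\<close>, the products
  \<open>(\<phi>\<^sub>j b - \<phi>\<^sub>j a) * (\<phi>\<^sub>j c - \<phi>\<^sub>j b)\<close> are nonnegative, and summing them over \<open>j\<close> expresses
  their total through the kernel: \<open>K a b + K b c - K b b - K a c \<ge> 0\<close>. For the Gaussian
  kernel at the points \<open>0, d, 2d\<close> with \<open>\<gamma> d\<^sup>2 = 1\<close> this reads \<open>2 e\<^sup>-\<^sup>1 \<ge> 1 + e\<^sup>-\<^sup>4\<close>,
  which is false since \<open>e > 2\<close>.\<close>

lemma monotone_on_either_diff_mult_nonneg:
  fixes f :: "'a::order \<Rightarrow> 'b::ordered_ring"
  assumes "monotone_on X (\<le>) (\<le>) f \<or> monotone_on X (\<le>) (\<ge>) f"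
    and "a \<in> X" "b \<in> X" "c \<in> X" "a \<le> b" "b \<le> c"
  shows "0 \<le> (f b - f a) * (f c - f b)"
  using assms(1)
proof
  assume "monotone_on X (\<le>) (\<le>) f"
  then have "f a \<le> f b" "f b \<le> f c"
    using assms(2-) by (auto simp: monotone_on_def)
  then show ?thesis by (simp add: mult_nonneg_nonneg)
next
  assume "monotone_on X (\<le>) (\<ge>) f"
  then have "f b \<le> f a" "f c \<le> f b"
    using assms(2-) by (auto simp: monotone_on_def)
  then show ?thesis by (simp add: mult_nonpos_nonpos)
qed

lemma kernel_ineq_if_monotone_features:
  fixes \<phi> :: "'i \<Rightarrow> 'a::order \<Rightarrow> 'b::ordered_comm_ring"
  assumes feature_map: "\<forall>x\<in>X. \<forall>y\<in>X. (\<Sum>j\<in>J. \<phi> j x * \<phi> j y) = K x y"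
    and monotone: "\<forall>j\<in>J. monotone_on X (\<le>) (\<le>) (\<phi> j) \<or> monotone_on X (\<le>) (\<ge>) (\<phi> j)"
    and "a \<in> X" "b \<in> X" "c \<in> X" "a \<le> b" "b \<le> c"
  shows "K b b + K a c \<le> K a b + K b c"
proof -
  have "0 \<le> (\<Sum>j\<in>J. (\<phi> j b - \<phi> j a) * (\<phi> j c - \<phi> j b))"
    using monotone assms(3-)
    by (intro sum_nonneg monotone_on_either_diff_mult_nonneg) auto
  also have "\<dots> = (\<Sum>j\<in>J. \<phi> j a * \<phi> j b) + (\<Sum>j\<in>J. \<phi> j b * \<phi> j c)
      - (\<Sum>j\<in>J. \<phi> j b * \<phi> j b) - (\<Sum>j\<in>J. \<phi> j a * \<phi> j c)"
    by (simp add: sum_subtractf sum.distrib algebra_simps)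
  also have "\<dots> = K a b + K b c - K b b - K a c"
    using feature_map assms(3-5) by simp
  finally show ?thesis by (simp add: algebra_simps)
qed

lemma gauss_kernel_three_point_gap:
  assumes "\<gamma> > 0"
  defines "d \<equiv> 1 / sqrt \<gamma>"
  shows "gauss_kernel \<gamma> 0 d + gauss_kernel \<gamma> d (2 * d)
    < gauss_kernel \<gamma> d d + gauss_kernel \<gamma> 0 (2 * d)"
proof -
  have "\<gamma> * d\<^sup>2 = 1"
    using assms by (simp add: d_def power_divide)
  then have "gauss_kernel \<gamma> 0 d = exp (-1)" "gauss_kernel \<gamma> d (2 * d) = exp (-1)"
    "gauss_kernel \<gamma> d d = 1" "gauss_kernel \<gamma> 0 (2 * d) = exp (-4)"
    by (simp_all add: gauss_kernel_def power_mult_distrib)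
  moreover have "2 * exp (-1) \<le> (1::real)"
  proof -
    have "2 \<le> exp (1::real)"
      using exp_ge_add_one_self[of 1] by simp
    then show ?thesis by (simp add: exp_minus field_simps)
  qed
  ultimately show ?thesis
    using exp_gt_zero[of "-4"] by linarith
qed

theorem theorem2:
  fixes \<gamma> :: real
  assumes "\<gamma> > 0"
  shows "\<exists>X :: real set. finite X \<and>
    (\<forall>(D::nat) (\<phi>::nat \<Rightarrow> real \<Rightarrow> real).
       (\<forall>x\<in>X. \<forall>y\<in>X. (\<Sum>j\<in>{1..D}. \<phi> j x * \<phi> j y) = gauss_kernel \<gamma> x y)
       \<longrightarrow> (\<exists>j\<in>{1..D}. \<not> monotone_on X (\<le>) (\<le>) (\<phi> j) \<and> \<not> monotone_on X (\<le>) (\<ge>) (\<phi> j)))"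
proof -
  define d where "d = 1 / sqrt \<gamma>"
  have "d \<ge> 0" using assms by (simp add: d_def)
  let ?X = "{0, d, 2 * d}"
  show ?thesis
  proof (intro exI[of _ ?X] conjI allI impI)
    show "finite ?X" by simp
    fix D and \<phi> :: "nat \<Rightarrow> real \<Rightarrow> real"
    assume feature_map: "\<forall>x\<in>?X. \<forall>y\<in>?X. (\<Sum>j\<in>{1..D}. \<phi> j x * \<phi> j y) = gauss_kernel \<gamma> x y"
    show "\<exists>j\<in>{1..D}. \<not> monotone_on ?X (\<le>) (\<le>) (\<phi> j) \<and> \<not> monotone_on ?X (\<le>) (\<ge>) (\<phi> j)"
    proof (rule ccontr)
      assume "\<not> ?thesis"
      then have monotone:
        "\<forall>j\<in>{1..D}. monotone_on ?X (\<le>) (\<le>) (\<phi> j) \<or> monotone_on ?X (\<le>) (\<ge>) (\<phi> j)"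
        by blast
      have "gauss_kernel \<gamma> d d + gauss_kernel \<gamma> 0 (2 * d)
          \<le> gauss_kernel \<gamma> 0 d + gauss_kernel \<gamma> d (2 * d)"
        using kernel_ineq_if_monotone_features[OF feature_map monotone, of 0 d "2 * d"] \<open>d \<ge> 0\<close>
        by simp
      with gauss_kernel_three_point_gap[OF assms, folded d_def] show False
        by linarith
    qed
  qed
qed

end
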